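(* Let $z\in\mathcal F^{\mathsf{BC}}_n$. Then $z\in\mathcal G^{\mathsf{BC}}_n$ if and only if there is an integer $0\le i\le n$ with $i\equiv n\pmod 2$ such that $-n\le z(n+1)<z(n+2)<\dots<z(n+i)\le n$ and $z(n+i+2j)=n+i+2j-1$ for each integer $j>0$ with $n+i+2j\le 2n$.
   Context: $W^{\mathsf{BC}}_{2n}$ is the group of permutations $w$ of $\{\pm1,\dots,\pm2n\}$ with $w(-i)=-w(i)$. $\mathcal F^{\mathsf{BC}}_n=\{z\in W^{\mathsf{BC}}_{2n}:z=z^{-1},\ |z(i)|\neq i\text{ for all }i\in[2n]\}$. An integer $i>0$ is a visible descent of $z$ if $z(i+1)<\min\{i,z(i)\}$ or $z(i)<-i$. $\mathcal G^{\mathsf{BC}}_n$ is the set of $z\in\mathcal F^{\mathsf{BC}}_n$ with no visible descent greater than $n$. *)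

theory Defs
  imports Main
begin

definition signed_set :: "nat \<Rightarrow> int set" where
  "signed_set m = {i. 1 \<le> \<bar>i\<bar> \<and> \<bar>i\<bar> \<le> int m}"

definition W_BC :: "nat \<Rightarrow> (int \<Rightarrow> int) set" where
  "W_BC m = {w. bij_betw w (signed_set m) (signed_set m)
               \<and> (\<forall>i\<in>signed_set m. w (-i) = - w i)
               \<and> (\<forall>i. i \<notin> signed_set m \<longrightarrow> w i = i)}"

definition F_BC :: "nat \<Rightarrow> (int \<Rightarrow> int) set" where
  "F_BC n = {z. z \<in> W_BC (2*n) \<and> z \<circ> z = id
               \<and> (\<forall>i. 1 \<le> i \<and> i \<le> int (2*n) \<longrightarrow> \<bar>z i\<bar> \<noteq> i)}"

definition visible_descent :: "(int \<Rightarrow> int) \<Rightarrow> int \<Rightarrow> bool" where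
  "visible_descent z i \<longleftrightarrow> 0 < i \<and> (z (i+1) < min i (z i) \<or> z i < - i)"

definition G_BC :: "nat \<Rightarrow> (int \<Rightarrow> int) set" where
  "G_BC n = {z. z \<in> F_BC n \<and> (\<forall>i. visible_descent z i \<longrightarrow> i \<le> int n)}"

end

theory Submission
  imports Defs
begin

text \<open>Having no visible descent above \<open>n\<close> means \<open>min t (z t) \<le> z (t+1)\<close> and \<open>-t \<le> z t\<close> for
  all \<open>t > n\<close>. The first condition makes the positions \<open>t \<in> (n, 2n]\<close> with \<open>z t > n\<close> an upper
  interval \<open>(m, 2n]\<close>, which the involution \<open>z\<close> must then map to itself; there it has neither
  fixed points nor descents, which forces it to swap \<open>m+1 \<leftrightarrow> m+2\<close>, \<open>m+3 \<leftrightarrow> m+4\<close>, \<dots>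
  On \<open>(n, m]\<close> the values lie in \<open>[-n, n]\<close>, where \<open>min t (z t) = z t\<close>, so there \<open>z\<close>
  increases. Conversely, such a \<open>z\<close> visibly has no descent above \<open>n\<close>.\<close>

lemma F_BC_involution:
  assumes "z \<in> F_BC n"
  shows "z (z k) = k"
proof -
  have "z \<circ> z = id" using assms by (simp add: F_BC_def)
  then show ?thesis by (metis comp_apply id_apply)
qed

lemma F_BC_fixes_outside:
  "z \<in> F_BC n \<Longrightarrow> \<not> (1 \<le> \<bar>k\<bar> \<and> \<bar>k\<bar> \<le> 2 * int n) \<Longrightarrow> z k = k"
  by (auto simp: F_BC_def W_BC_def signed_set_def)

lemma F_BC_odd:
  assumes "z \<in> F_BC n"
  shows "z (- k) = - z k"
proof (cases "1 \<le> \<bar>k\<bar> \<and> \<bar>k\<bar> \<le> 2 * int n")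
  case True
  then show ?thesis using assms by (auto simp: F_BC_def W_BC_def signed_set_def)
qed (use F_BC_fixes_outside[OF assms] in auto)

lemma F_BC_abs_bounded:
  assumes "z \<in> F_BC n" "1 \<le> \<bar>k\<bar>" "\<bar>k\<bar> \<le> 2 * int n"
  shows "\<bar>z k\<bar> \<le> 2 * int n"
proof -
  have "bij_betw z (signed_set (2*n)) (signed_set (2*n))"
    using assms(1) by (simp add: F_BC_def W_BC_def)
  then have "z k \<in> signed_set (2*n)"
    using assms(2,3) by (auto simp: signed_set_def dest: bij_betw_apply)
  then show ?thesis by (simp add: signed_set_def)
qed

lemma F_BC_abs_neq:
  "z \<in> F_BC n \<Longrightarrow> 1 \<le> k \<Longrightarrow> k \<le> 2 * int n \<Longrightarrow> \<bar>z k\<bar> \<noteq> k"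
  by (auto simp: F_BC_def)

lemma G_BC_no_descent_above:
  assumes "z \<in> G_BC n" "int n < t"
  shows "min t (z t) \<le> z (t + 1)" and "- t \<le> z t"
proof -
  have "\<not> visible_descent z t" using assms by (auto simp: G_BC_def)
  then show "min t (z t) \<le> z (t + 1)" "- t \<le> z t"
    using assms(2) by (auto simp: visible_descent_def)
qed

lemma upward_closed_interval_threshold:
  fixes P :: "int \<Rightarrow> bool" and a b :: int
  assumes "a \<le> b" and step: "\<And>t. a < t \<Longrightarrow> t < b \<Longrightarrow> P t \<Longrightarrow> P (t + 1)"
  shows "\<exists>m. a \<le> m \<and> m \<le> b \<and> (\<forall>t. a < t \<and> t \<le> m \<longrightarrow> \<not> P t) \<and> (\<forall>t. m < t \<and> t \<le> b \<longrightarrow> P t)"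
  using assms
proof (induction b rule: int_ge_induct)
  case base
  show ?case by auto
next
  case (step b)
  have "\<exists>m. a \<le> m \<and> m \<le> b \<and> (\<forall>t. a < t \<and> t \<le> m \<longrightarrow> \<not> P t) \<and> (\<forall>t. m < t \<and> t \<le> b \<longrightarrow> P t)"
    using step.prems by (intro step.IH) auto
  then obtain m where m: "a \<le> m" "m \<le> b" "\<forall>t. a < t \<and> t \<le> m \<longrightarrow> \<not> P t"
    "\<forall>t. m < t \<and> t \<le> b \<longrightarrow> P t" by blast
  show ?case
  proof (cases "P (b + 1)")
    case True
    have "P t" if "m < t" "t \<le> b + 1" for t
      using m(4) True that by (cases "t = b + 1") auto
    then show ?thesis using m by (intro exI[of _ m]) auto
  next
    case False
    have "m = b"
    proof (rule ccontr)
      assume "m \<noteq> b"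
      then have "P b" "a < b" using m by auto
      then show False using step.prems[of b] False by simp
    qed
    have "\<not> P t" if "a < t" "t \<le> b + 1" for t
      using m(3) False that \<open>m = b\<close> by (cases "t = b + 1") auto
    then show ?thesis using m by (intro exI[of _ "b + 1"]) auto
  qed
qed

context
  fixes z :: "int \<Rightarrow> int" and N :: int
  assumes involution: "\<And>k. z (z k) = k"
begin

lemma involution_first_pair:
  assumes stable: "\<And>t. m < t \<Longrightarrow> t \<le> N \<Longrightarrow> m < z t \<and> z t \<le> N"
    and no_fixed: "\<And>t. m < t \<Longrightarrow> t \<le> N \<Longrightarrow> z t \<noteq> t"
    and ascent: "\<And>t. m < t \<Longrightarrow> t < N \<Longrightarrow> min t (z t) \<le> z (t + 1)"
    and "m < N"
  shows "m + 2 \<le> N" and "z (m + 1) = m + 2"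
proof -
  define a where "a = z (m + 1)"
  have a: "m < a" "a \<le> N" "a \<noteq> m + 1"
    using stable[of "m+1"] no_fixed[of "m+1"] \<open>m < N\<close> by (auto simp: a_def)
  then show "m + 2 \<le> N" by auto
  show "z (m + 1) = m + 2"
  proof (rule ccontr)
    assume "z (m + 1) \<noteq> m + 2"
    then have "m + 3 \<le> a" using a by (auto simp: a_def)
    txt \<open>Then \<open>a - 1 \<to> a\<close> is an ascent only if \<open>z (a - 1) \<le> z a = m + 1\<close>, i.e. \<open>z (a - 1) = m + 1\<close>.\<close>
    have "min (a - 1) (z (a - 1)) \<le> m + 1"
      using ascent[of "a - 1"] a involution[of "m+1"] \<open>m + 3 \<le> a\<close> by (simp add: a_def)
    then have "z (a - 1) = m + 1"
      using stable[of "a - 1"] a \<open>m + 3 \<le> a\<close> by auto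
    then show False using involution[of "a - 1"] by (simp add: a_def)
  qed
qed

lemma involution_pairs_consecutive:
  assumes stable: "\<And>t. m < t \<Longrightarrow> t \<le> N \<Longrightarrow> m < z t \<and> z t \<le> N"
    and no_fixed: "\<And>t. m < t \<Longrightarrow> t \<le> N \<Longrightarrow> z t \<noteq> t"
    and ascent: "\<And>t. m < t \<Longrightarrow> t < N \<Longrightarrow> min t (z t) \<le> z (t + 1)"
    and "m \<le> N"
  shows "even (N - m) \<and> (\<forall>j>0. m + 2*j \<le> N \<longrightarrow> z (m + 2*j) = m + 2*j - 1)"
  using assms
proof (induction "nat (N - m)" arbitrary: m rule: less_induct)
  case less
  show ?case
  proof (cases "m = N")
    case False
    then have "m < N" using less.prems by simp
    have first: "m + 2 \<le> N" "z (m + 1) = m + 2"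
      using involution_first_pair[of m] less.prems \<open>m < N\<close> by blast+
    have z2: "z (m + 2) = m + 1" using first(2) involution[of "m+1"] by simp
    have "m + 2 < z t \<and> z t \<le> N" if "m + 2 < t" "t \<le> N" for t
      using less.prems that involution[of t] first(2) z2 by (smt (verit))
    then have IH: "even (N - (m + 2)) \<and>
        (\<forall>j>0. m + 2 + 2*j \<le> N \<longrightarrow> z (m + 2 + 2*j) = m + 2 + 2*j - 1)"
      using less.prems first(1) by (intro less.hyps) auto
    have "z (m + 2*j) = m + 2*j - 1" if "j > 0" "m + 2*j \<le> N" for j
    proof (cases "j = 1")
      case False
      then show ?thesis
        using IH that by (auto dest!: spec[of _ "j - 1"] simp: algebra_simps)
    qed (simp add: z2)
    moreover have "even (N - m)" using IH by (simp add: algebra_simps)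
    ultimately show ?thesis by blast
  qed simp
qed

end

definition G_BC_shape :: "nat \<Rightarrow> (int \<Rightarrow> int) \<Rightarrow> int \<Rightarrow> bool" where
  "G_BC_shape n z i \<longleftrightarrow> 0 \<le> i \<and> i \<le> int n \<and> i mod 2 = int n mod 2
       \<and> (\<forall>k. int n + 1 \<le> k \<and> k \<le> int n + i \<longrightarrow> - int n \<le> z k \<and> z k \<le> int n)
       \<and> (\<forall>k. int n + 1 \<le> k \<and> k < int n + i \<longrightarrow> z k < z (k+1))
       \<and> (\<forall>j::int. j > 0 \<and> int n + i + 2*j \<le> 2 * int n \<longrightarrow>
             z (int n + i + 2*j) = int n + i + 2*j - 1)"

lemma G_BC_threshold:
  assumes "z \<in> G_BC n"
  obtains m where "int n \<le> m" "m \<le> 2 * int n"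
    "\<And>t. int n < t \<Longrightarrow> t \<le> m \<Longrightarrow> z t \<le> int n"
    "\<And>t. m < t \<Longrightarrow> t \<le> 2 * int n \<Longrightarrow> int n < z t"
proof -
  have "int n < z (t + 1)" if "int n < t" "int n < z t" for t
    using G_BC_no_descent_above(1)[OF assms that(1)] that by linarith
  then show ?thesis
    using upward_closed_interval_threshold[of "int n" "2 * int n" "\<lambda>t. int n < z t"] that
    by (auto simp: not_less)
qed

lemma G_BC_lower_bound:
  assumes G: "z \<in> G_BC n" and t: "int n < t" "t \<le> 2 * int n" and "z t \<le> int n"
  shows "- int n \<le> z t"
proof (rule ccontr)
  assume "\<not> - int n \<le> z t"
  have F: "z \<in> F_BC n" using G by (simp add: G_BC_def)
  txt \<open>Then \<open>s = -z t\<close> lies in \<open>(n, 2n]\<close> with \<open>z s = -t\<close>; whichever of \<open>s, t\<close> is smaller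
    violates \<open>-u \<le> z u\<close>.\<close>
  define s where "s = - z t"
  have s: "int n < s" "s \<le> 2 * int n"
    using \<open>\<not> - int n \<le> z t\<close> F_BC_abs_bounded[OF F, of t] t by (auto simp: s_def)
  have "z s = - t" using F_BC_odd[OF F, of "z t"] F_BC_involution[OF F, of t] by (simp add: s_def)
  moreover have "s \<noteq> t" using F_BC_abs_neq[OF F, of t] t by (auto simp: s_def)
  ultimately show False
    using G_BC_no_descent_above(2)[OF G, of s] G_BC_no_descent_above(2)[OF G, of t] s t
    by (auto simp: s_def)
qed

lemma G_BC_has_shape:
  assumes G: "z \<in> G_BC n"
  shows "\<exists>i. G_BC_shape n z i"
proof -
  have F: "z \<in> F_BC n" using G by (simp add: G_BC_def)
  obtain m where m: "int n \<le> m" "m \<le> 2 * int n"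
    and low: "\<And>t. int n < t \<Longrightarrow> t \<le> m \<Longrightarrow> z t \<le> int n"
    and high: "\<And>t. m < t \<Longrightarrow> t \<le> 2 * int n \<Longrightarrow> int n < z t"
    using G_BC_threshold[OF G] by blast
  have lower: "- int n \<le> z t" if "int n < t" "t \<le> m" for t
    using G_BC_lower_bound[OF G, of t] that m low by auto
  have increasing: "z t < z (t + 1)" if "int n < t" "t < m" for t
  proof -
    have "z t \<le> z (t + 1)" using G_BC_no_descent_above(1)[OF G, of t] low[of t] that by auto
    moreover have "z t \<noteq> z (t + 1)"
      using F_BC_involution[OF F, of t] F_BC_involution[OF F, of "t + 1"] by auto
    ultimately show ?thesis by simp
  qed
  have stable: "m < z t \<and> z t \<le> 2 * int n" if "m < t" "t \<le> 2 * int n" for t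
  proof -
    have "\<not> z t \<le> m" using low[of "z t"] high[of t] F_BC_involution[OF F, of t] that m by auto
    then show ?thesis using F_BC_abs_bounded[OF F, of t] high[of t] that m by auto
  qed
  have pairs: "even (2 * int n - m) \<and>
      (\<forall>j>0. m + 2*j \<le> 2 * int n \<longrightarrow> z (m + 2*j) = m + 2*j - 1)"
  proof (rule involution_pairs_consecutive[OF F_BC_involution[OF F] stable])
    show "z t \<noteq> t" if "m < t" "t \<le> 2 * int n" for t
      using F_BC_abs_neq[OF F, of t] that m by auto
    show "min t (z t) \<le> z (t + 1)" if "m < t" "t < 2 * int n" for t
      using G_BC_no_descent_above(1)[OF G, of t] that m by auto
  qed (use m in auto)
  moreover have "(m - int n) mod 2 = int n mod 2"
    using pairs m by (auto elim!: evenE) presburger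
  ultimately have "G_BC_shape n z (m - int n)"
    using m low lower increasing unfolding G_BC_shape_def by auto
  then show ?thesis ..
qed

lemma G_BC_shape_upper_part:
  assumes F: "z \<in> F_BC n" and shape: "G_BC_shape n z i"
    and t: "int n + i < t" "t \<le> 2 * int n"
  shows "t - 1 \<le> z t"
proof (cases "even (t - int n - i)")
  case True
  then obtain j where "t - int n - i = 2 * j" by (rule evenE)
  then have j: "t = int n + i + 2 * j" by simp
  then have "0 < j" "int n + i + 2 * j \<le> 2 * int n" using t by auto
  then have "z t = t - 1" using shape j unfolding G_BC_shape_def by blast
  then show ?thesis by simp
next
  case False
  then obtain j where j: "t - int n - i = 2 * j + 1" by (rule oddE)
  have "t \<noteq> 2 * int n" using False shape by (auto simp: G_BC_shape_def)
  have t1: "t + 1 = int n + i + 2 * (j + 1)" using j by simp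
  then have "0 < j + 1" "int n + i + 2 * (j + 1) \<le> 2 * int n" using t \<open>t \<noteq> 2 * int n\<close> by auto
  then have "z (int n + i + 2 * (j + 1)) = int n + i + 2 * (j + 1) - 1"
    using shape unfolding G_BC_shape_def by blast
  then have "z (t + 1) = t" using t1 by (metis add_diff_cancel_right')
  then show ?thesis using F_BC_involution[OF F, of "t + 1"] by simp
qed

lemma G_BC_shape_imp_G_BC:
  assumes F: "z \<in> F_BC n" and shape: "G_BC_shape n z i"
  shows "z \<in> G_BC n"
  unfolding G_BC_def
proof (intro CollectI conjI allI impI F, rule ccontr)
  fix t assume "visible_descent z t" "\<not> t \<le> int n"
  then have desc: "z (t + 1) < min t (z t) \<or> z t < - t" and "int n < t"
    by (auto simp: visible_descent_def)
  show False
  proof (cases "t \<le> 2 * int n")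
    case False
    then show ?thesis using desc F_BC_fixes_outside[OF F] \<open>int n < t\<close> by auto
  next
    case True
    have "- t \<le> z t"
    proof (cases "t \<le> int n + i")
      case True
      then have "- int n \<le> z t" using shape \<open>int n < t\<close> by (auto simp: G_BC_shape_def)
      then show ?thesis using \<open>int n < t\<close> by linarith
    qed (use G_BC_shape_upper_part[OF F shape, of t] \<open>t \<le> 2 * int n\<close> \<open>int n < t\<close> in auto)
    moreover have "min t (z t) \<le> z (t + 1)"
    proof (cases "t = 2 * int n")
      case True
      then show ?thesis using F_BC_fixes_outside[OF F, of "t + 1"] by auto
    next
      case False
      show ?thesis
      proof (cases "t < int n + i")
        case True
        then have "z t < z (t + 1)" using shape \<open>int n < t\<close> by (auto simp: G_BC_shape_def)
        then show ?thesis by linarith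
      qed (use G_BC_shape_upper_part[OF F shape, of "t + 1"] False \<open>t \<le> 2 * int n\<close> in auto)
    qed
    ultimately show False using desc by linarith
  qed
qed

theorem mainTheorem7:
  fixes n :: nat and z :: "int \<Rightarrow> int"
  assumes "z \<in> F_BC n"
  shows "z \<in> G_BC n \<longleftrightarrow>
    (\<exists>i::int. 0 \<le> i \<and> i \<le> int n \<and> i mod 2 = int n mod 2
       \<and> (\<forall>k. int n + 1 \<le> k \<and> k \<le> int n + i \<longrightarrow> - int n \<le> z k \<and> z k \<le> int n)
       \<and> (\<forall>k. int n + 1 \<le> k \<and> k < int n + i \<longrightarrow> z k < z (k+1))
       \<and> (\<forall>j::int. j > 0 \<and> int n + i + 2*j \<le> 2 * int n \<longrightarrow>
             z (int n + i + 2*j) = int n + i + 2*j - 1))"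
proof -
  have "z \<in> G_BC n \<longleftrightarrow> (\<exists>i. G_BC_shape n z i)"
    using G_BC_has_shape G_BC_shape_imp_G_BC assms by blast
  then show ?thesis unfolding G_BC_shape_def .
qed

end
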